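(* Let $X$ be a compact metric space and $T:X\to X$ a surjective local homeomorphism such that $Sp_l(X,T)$ is a finite set of isolated points of $X$. Then \[{\rm dad}(\mathcal{G}_{(X,T)})\le{\rm dim}_{\rm am}(X,T).\]
   Context: $Sp_l(X,T)=\{x:|T^{-1}(\{x\})|\ge2\}$. $\mathcal{G}_{(X,T)}=\{(x,m-n,y)\in X\times\mathbb{Z}\times X: T^m(x)=T^n(y), m,n\in\mathbb{N}\}$, the Deaconu–Renault groupoid with unit space $X$, $r(x,k,y)=x$, $s(x,k,y)=y$, $(x,k,y)(y,l,z)=(x,k+l,z)$, standard étale topology. Dynamic asymptotic dimension ${\rm dad}(\mathcal{G})$ of an étale groupoid: least $d$ such that for every open relatively compact $K\subseteq\mathcal{G}$ there are open $U_0,\dots,U_d\subseteq\mathcal{G}^{(0)}$ covering $s(K)\cup r(K)$ such that each set $\{g\in K: s(g),r(g)\in U_i\}$ is contained in a relatively compact subgroupoid of $\mathcal{G}$. Amenability dimension: $P_d(\mathbb{Z})$ = probability measures on $\mathbb{Z}$ supported on at most $d+1$ points, $\rho(\mu,\nu)=\sum_m|\mu(m)-\nu(m)|$, $\alpha_n(\mu)(m)=\mu(m-n)$; $T^n(\{x\})$ is the image under $T^n$ for $n\ge0$ and the preimage under $T^{|n|}$ for $n<0$; $\varphi:X\to P_d(\mathbb{Z})$ is $(E,\varepsilon)$-equivariant if $\rho(\varphi(y),\alpha_n(\varphi(x)))<\varepsilon$ for all $n\in E$, $y\in T^n(\{x\})$; ${\rm dim}_{\rm am}(X,T)$ is the least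 $d$ such that for all finite $E\subseteq\mathbb{Z}$, $\varepsilon>0$ a continuous $(E,\varepsilon)$-equivariant $\varphi:X\to P_d(\mathbb{Z})$ exists. *)

theory Defs
  imports "HOL-Analysis.Analysis"
begin

definition local_homeo :: "('a::topological_space \<Rightarrow> 'a) \<Rightarrow> bool" where
  "local_homeo T \<longleftrightarrow> (\<forall>x. \<exists>U. open U \<and> x \<in> U \<and> open (T ` U) \<and>
      (\<exists>g. homeomorphism U (T ` U) T g))"

definition Sp_l :: "('a \<Rightarrow> 'a) \<Rightarrow> 'a set" where
  "Sp_l T = {x. \<exists>y z. y \<noteq> z \<and> T y = x \<and> T z = x}"

definition DR :: "('a \<Rightarrow> 'a) \<Rightarrow> ('a \<times> int \<times> 'a) set" where
  "DR T = {(x, k, y). \<exists>m n. (T ^^ m) x = (T ^^ n) y \<and> k = int m - int n}"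

definition Zset :: "('a \<Rightarrow> 'a) \<Rightarrow> 'a set \<Rightarrow> nat \<Rightarrow> nat \<Rightarrow> 'a set \<Rightarrow> ('a \<times> int \<times> 'a) set" where
  "Zset T U m n V = {(x, k, y). x \<in> U \<and> y \<in> V \<and> (T ^^ m) x = (T ^^ n) y \<and> k = int m - int n}"

definition DR_top :: "('a::topological_space \<Rightarrow> 'a) \<Rightarrow> ('a \<times> int \<times> 'a) topology" where
  "DR_top T = topology_generated_by {Zset T U m n V | U m n V. open U \<and> open V}"

definition rng :: "'a \<times> int \<times> 'a \<Rightarrow> 'a" where "rng g = fst g"
definition src :: "'a \<times> int \<times> 'a \<Rightarrow> 'a" where "src g = snd (snd g)"

definition subgroupoid :: "('a \<Rightarrow> 'a) \<Rightarrow> ('a \<times> int \<times> 'a) set \<Rightarrow> bool" where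
  "subgroupoid T H \<longleftrightarrow> H \<subseteq> DR T \<and>
     (\<forall>x k y l z. (x, k, y) \<in> H \<and> (y, l, z) \<in> H \<longrightarrow> (x, k + l, z) \<in> H) \<and>
     (\<forall>x k y. (x, k, y) \<in> H \<longrightarrow> (y, -k, x) \<in> H)"

definition rel_compact :: "('a::topological_space \<Rightarrow> 'a) \<Rightarrow> ('a \<times> int \<times> 'a) set \<Rightarrow> bool" where
  "rel_compact T K \<longleftrightarrow> K \<subseteq> DR T \<and> compactin (DR_top T) ((DR_top T) closure_of K)"

definition dad_le :: "('a::topological_space \<Rightarrow> 'a) \<Rightarrow> nat \<Rightarrow> bool" where
  "dad_le T d \<longleftrightarrow> (\<forall>K. openin (DR_top T) K \<and> rel_compact T K \<longrightarrow>
     (\<exists>U :: nat \<Rightarrow> 'a set. (\<forall>i\<le>d. open (U i)) \<and>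
        src ` K \<union> rng ` K \<subseteq> (\<Union>i\<le>d. U i) \<and>
        (\<forall>i\<le>d. \<exists>H. subgroupoid T H \<and> rel_compact T H \<and>
            {g \<in> K. src g \<in> U i \<and> rng g \<in> U i} \<subseteq> H)))"

text \<open>P_d(Z): probability measures on Z supported on at most d+1 points,
represented by their mass functions.\<close>
definition Pd :: "nat \<Rightarrow> (int \<Rightarrow> real) set" where
  "Pd d = {\<mu>. (\<forall>m. \<mu> m \<ge> 0) \<and> finite {m. \<mu> m \<noteq> 0} \<and> card {m. \<mu> m \<noteq> 0} \<le> d + 1
             \<and> (\<Sum>m\<in>{m. \<mu> m \<noteq> 0}. \<mu> m) = 1}"

definition rho :: "(int \<Rightarrow> real) \<Rightarrow> (int \<Rightarrow> real) \<Rightarrow> real" where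
  "rho \<mu> \<nu> = (\<Sum>m\<in>{m. \<mu> m \<noteq> 0} \<union> {m. \<nu> m \<noteq> 0}. \<bar>\<mu> m - \<nu> m\<bar>)"

definition shift :: "int \<Rightarrow> (int \<Rightarrow> real) \<Rightarrow> (int \<Rightarrow> real)" where
  "shift n \<mu> = (\<lambda>m. \<mu> (m - n))"

definition Tn_set :: "('a \<Rightarrow> 'a) \<Rightarrow> int \<Rightarrow> 'a \<Rightarrow> 'a set" where
  "Tn_set T n x = (if n \<ge> 0 then {(T ^^ nat n) x} else {y. (T ^^ nat (- n)) y = x})"

definition equivariant :: "('a \<Rightarrow> 'a) \<Rightarrow> int set \<Rightarrow> real \<Rightarrow> ('a \<Rightarrow> int \<Rightarrow> real) \<Rightarrow> bool" where
  "equivariant T E \<epsilon> \<phi> \<longleftrightarrow>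
     (\<forall>n\<in>E. \<forall>x. \<forall>y\<in>Tn_set T n x. rho (\<phi> y) (shift n (\<phi> x)) < \<epsilon>)"

definition rho_continuous :: "('a::metric_space \<Rightarrow> int \<Rightarrow> real) \<Rightarrow> bool" where
  "rho_continuous \<phi> \<longleftrightarrow> (\<forall>x \<epsilon>. \<epsilon> > 0 \<longrightarrow>
      (\<exists>\<delta>>0. \<forall>y. dist y x < \<delta> \<longrightarrow> rho (\<phi> y) (\<phi> x) < \<epsilon>))"

definition dim_am_le :: "('a::metric_space \<Rightarrow> 'a) \<Rightarrow> nat \<Rightarrow> bool" where
  "dim_am_le T d \<longleftrightarrow> (\<forall>E \<epsilon>. finite E \<and> \<epsilon> > 0 \<longrightarrow>
     (\<exists>\<phi>. (\<forall>x. \<phi> x \<in> Pd d) \<and> rho_continuous \<phi> \<and> equivariant T E \<epsilon> \<phi>))"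

end

theory Submission
  imports Defs
begin

text \<open>
  A relatively compact open set K of arrows only uses lags m, n \<le> M. Take a continuous
  (E, \<epsilon>)-equivariant map \<phi> into P_d(\<int>) with E = [-M, M] and \<epsilon> small compared with a fixed
  gap width w. Each \<phi> x has a set of i + 1 \<le> d + 1 atoms lying above a gap of width w, and
  these sizes give an open cover U_0, ..., U_d of X. Near-equivariance forces the top set of
  \<phi> y to be the translate by m - n of that of \<phi> x whenever T^m x = T^n y with m, n \<le> M, so
  the least top atom c_i is a cocycle on U_i. It is bounded by compactness, hence the arrows
  (x, c_i y - c_i x, y) with T^(L - c_i x) x = T^(L - c_i y) y form a relatively compact
  subgroupoid containing all arrows of K with both ends in U_i.
\<close>

lemma local_homeo_continuous:
  fixes T :: "'a::t2_space \<Rightarrow> 'a"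
  assumes "local_homeo T"
  shows "continuous_on UNIV T"
proof -
  have "continuous (at x) T" for x
  proof -
    obtain U g where U: "open U" "x \<in> U" "homeomorphism U (T ` U) T g"
      using assms unfolding local_homeo_def by blast
    then have "continuous_on U T"
      by (simp add: homeomorphism_def)
    then show ?thesis
      using U continuous_on_eq_continuous_at by blast
  qed
  then show ?thesis
    by (simp add: continuous_at_imp_continuous_on)
qed

lemma continuous_on_funpow:
  fixes f :: "'a::topological_space \<Rightarrow> 'a"
  assumes "continuous_on UNIV f"
  shows "continuous_on UNIV (f ^^ n)"
proof (induction n)
  case 0
  then show ?case by (simp add: id_def)
next
  case (Suc n)
  have "f ^^ Suc n = f \<circ> (f ^^ n)"
    by simp
  then show ?case
    using Suc assms by (metis continuous_on_compose continuous_on_subset subset_UNIV)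
qed

lemma local_homeo_funpow_locally_inj:
  fixes T :: "'a::t2_space \<Rightarrow> 'a"
  assumes "local_homeo T"
  shows "\<exists>W. open W \<and> w \<in> W \<and> inj_on (T ^^ p) W"
proof (induction p arbitrary: w)
  case 0
  then show ?case by (intro exI[of _ UNIV]) auto
next
  case (Suc p)
  obtain A g where A: "open A" "w \<in> A" "homeomorphism A (T ` A) T g"
    using assms unfolding local_homeo_def by blast
  then have injA: "inj_on T A"
    by (metis homeomorphism_def inj_on_inverseI)
  obtain B where B: "open B" "T w \<in> B" "inj_on (T ^^ p) B"
    using Suc by blast
  have "open (A \<inter> T -` B)"
    using A(1) B(1) local_homeo_continuous[OF assms] open_vimage by blast
  moreover have "inj_on (T ^^ Suc p) (A \<inter> T -` B)"
  proof (rule inj_onI)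
    fix u v
    assume uv: "u \<in> A \<inter> T -` B" "v \<in> A \<inter> T -` B" "(T ^^ Suc p) u = (T ^^ Suc p) v"
    then have "(T ^^ p) (T u) = (T ^^ p) (T v)"
      by (simp add: funpow_Suc_right del: funpow.simps)
    then have "T u = T v"
      using B(3) uv by (auto dest: inj_onD)
    then show "u = v"
      using injA uv by (auto dest: inj_onD)
  qed
  ultimately show ?case
    using A B by blast
qed

lemma DR_eq_Union_Zset: "DR T = (\<Union>m n. Zset T UNIV m n UNIV)"
  by (auto simp: DR_def Zset_def)

lemma Zset_subset_DR: "Zset T U m n V \<subseteq> DR T"
  by (auto simp: Zset_def DR_def)

lemma topspace_DR_top: "topspace (DR_top T) = DR T"
  unfolding DR_top_def topology_generated_by_topspace
proof
  show "\<Union> {Zset T U m n V |U m n V. open U \<and> open V} \<subseteq> DR T"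
    using Zset_subset_DR by blast
  show "DR T \<subseteq> \<Union> {Zset T U m n V |U m n V. open U \<and> open V}"
    unfolding DR_eq_Union_Zset using open_UNIV by blast
qed

lemma openin_Zset: "open U \<Longrightarrow> open V \<Longrightarrow> openin (DR_top T) (Zset T U m n V)"
  unfolding DR_top_def by (rule topology_generated_by_Basis) blast

lemma closedin_Zset_UNIV:
  fixes T :: "'a::t2_space \<Rightarrow> 'a"
  assumes "local_homeo T"
  shows "closedin (DR_top T) (Zset T UNIV m n UNIV)"
  unfolding closedin_def topspace_DR_top
proof (intro conjI Zset_subset_DR)
  show "openin (DR_top T) (DR T - Zset T UNIV m n UNIV)"
  proof (subst openin_subopen, intro ballI)
    fix g assume g: "g \<in> DR T - Zset T UNIV m n UNIV"
    then obtain x k y m' n' where gg: "g = (x, k, y)" "(T ^^ m') x = (T ^^ n') y" "k = int m' - int n'"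
      by (auto simp: DR_def)
    show "\<exists>W. openin (DR_top T) W \<and> g \<in> W \<and> W \<subseteq> DR T - Zset T UNIV m n UNIV"
    proof (cases "k = int m - int n")
      case False
      then have "Zset T UNIV m' n' UNIV \<subseteq> DR T - Zset T UNIV m n UNIV"
        using gg by (auto simp: Zset_def DR_def)
      moreover have "g \<in> Zset T UNIV m' n' UNIV"
        using gg by (simp add: Zset_def)
      ultimately show ?thesis
        using openin_Zset[of UNIV UNIV T m' n'] by blast
    next
      case True
      then have "(T ^^ m) x \<noteq> (T ^^ n) y"
        using g gg by (auto simp: Zset_def)
      then obtain A B where AB: "open A" "open B" "(T ^^ m) x \<in> A" "(T ^^ n) y \<in> B" "A \<inter> B = {}"
        using separation_t2[of "(T ^^ m) x" "(T ^^ n) y"] by blast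
      have "continuous_on UNIV (T ^^ q)" for q
        using continuous_on_funpow[OF local_homeo_continuous[OF assms]] .
      then have opens: "open ((T ^^ m) -` A)" "open ((T ^^ n) -` B)"
        using AB open_vimage by blast+
      have "Zset T ((T ^^ m) -` A) m' n' ((T ^^ n) -` B) \<subseteq> DR T - Zset T UNIV m n UNIV"
        using AB by (auto simp: Zset_def DR_def)
      moreover have "g \<in> Zset T ((T ^^ m) -` A) m' n' ((T ^^ n) -` B)"
        using gg AB by (simp add: Zset_def)
      ultimately show ?thesis
        using openin_Zset[OF opens] by blast
    qed
  qed
qed

lemma lag_change_locally:
  fixes T :: "'a::t2_space \<Rightarrow> 'a"
  assumes lh: "local_homeo T" and "open U" "open V"
    and x: "x \<in> U" and y: "y \<in> V" and xy: "(T ^^ m') x = (T ^^ n') y"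
    and lags: "int m - int n = int m' - int n'"
  obtains A where "open A" "(x, y) \<in> A"
    "\<And>a b. (a, b) \<in> A \<Longrightarrow> (T ^^ m) a = (T ^^ n) b \<Longrightarrow> (a, int m - int n, b) \<in> Zset T U m' n' V"
proof (cases "m \<le> m'")
  case True
  define j where "j = m' - m"
  have m': "m' = j + m" and n': "n' = j + n"
    using True lags unfolding j_def by auto
  have "(a, int m - int n, b) \<in> Zset T U m' n' V"
    if "(a, b) \<in> U \<times> V" "(T ^^ m) a = (T ^^ n) b" for a b
    using that lags unfolding Zset_def m' n' by (simp add: funpow_add)
  moreover have "open (U \<times> V)" "(x, y) \<in> U \<times> V"
    using assms(2-5) by (auto intro: open_Times)
  ultimately show ?thesis
    using that by blast
next
  case False
  \<comment> \<open>Now the equation at lags (m, n) gives back the one at lags (m', n') only after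
      cancelling T^p, which is injective near the common image.\<close>
  define p where "p = m - m'"
  have m: "m = p + m'" and n: "n = p + n'"
    using False lags unfolding p_def by auto
  obtain W where W: "open W" "(T ^^ m') x \<in> W" "inj_on (T ^^ p) W"
    using local_homeo_funpow_locally_inj[OF lh] by blast
  have cont: "continuous_on UNIV (T ^^ q)" for q
    using continuous_on_funpow[OF local_homeo_continuous[OF lh]] .
  let ?A = "((T ^^ m') -` W \<inter> U) \<times> ((T ^^ n') -` W \<inter> V)"
  have "(a, int m - int n, b) \<in> Zset T U m' n' V"
    if ab: "(a, b) \<in> ?A" "(T ^^ m) a = (T ^^ n) b" for a b
  proof -
    have "(T ^^ p) ((T ^^ m') a) = (T ^^ p) ((T ^^ n') b)"
      using ab(2) unfolding m n by (simp add: funpow_add)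
    then have "(T ^^ m') a = (T ^^ n') b"
      using W(3) ab(1) by (auto dest: inj_onD)
    then show ?thesis
      using ab(1) lags unfolding Zset_def by simp
  qed
  moreover have "open ?A"
    using W(1) assms(2,3) cont by (intro open_Times open_Int open_vimage) auto
  moreover have "(x, y) \<in> ?A"
    using x y xy W(2) by simp
  ultimately show ?thesis
    using that by blast
qed

lemma image_lag_embedding:
  "(\<lambda>z. (fst z, int m - int n, snd z)) ` {z. (T ^^ m) (fst z) = (T ^^ n) (snd z)} =
    Zset T UNIV m n UNIV"
  unfolding Zset_def by (auto simp: image_iff)

lemma continuous_map_lag_embedding:
  fixes T :: "'a::t2_space \<Rightarrow> 'a" and m n :: nat
  assumes lh: "local_homeo T"
  defines "Q \<equiv> {z. (T ^^ m) (fst z) = (T ^^ n) (snd z)}"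
  shows "continuous_map (top_of_set Q) (DR_top T) (\<lambda>z. (fst z, int m - int n, snd z))"
  unfolding DR_top_def
proof (rule continuous_on_generated_topo)
  have "(\<lambda>z. (fst z, int m - int n, snd z)) ` topspace (top_of_set Q) = Zset T UNIV m n UNIV"
    unfolding Q_def by (simp add: image_lag_embedding)
  moreover have "Zset T UNIV m n UNIV \<in> {Zset T U m n V |U m n V. open U \<and> open V}"
    by blast
  ultimately show "(\<lambda>z. (fst z, int m - int n, snd z)) ` topspace (top_of_set Q) \<subseteq>
      \<Union> {Zset T U m n V |U m n V. open U \<and> open V}"
    by blast
next
  fix Z assume "Z \<in> {Zset T U m n V |U m n V. open U \<and> open V}"
  then obtain U V m' n' where Z: "Z = Zset T U m' n' V" "open U" "open V"
    by blast
  let ?P = "(\<lambda>z. (fst z, int m - int n, snd z)) -` Z \<inter> topspace (top_of_set Q)"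
  show "openin (top_of_set Q) ?P"
  proof (subst openin_subopen, intro ballI)
    fix z assume z: "z \<in> ?P"
    then have zz: "fst z \<in> U" "snd z \<in> V" "(T ^^ m') (fst z) = (T ^^ n') (snd z)"
      "int m - int n = int m' - int n'"
      using Z unfolding Zset_def by auto
    obtain A where A: "open A" "(fst z, snd z) \<in> A"
      "\<And>a b. (a, b) \<in> A \<Longrightarrow> (T ^^ m) a = (T ^^ n) b \<Longrightarrow> (a, int m - int n, b) \<in> Z"
      unfolding Z(1) by (rule lag_change_locally[OF lh Z(2,3) zz]) blast
    have "Q \<inter> A \<subseteq> ?P"
      using A(3) unfolding Q_def by auto
    moreover have "z \<in> Q \<inter> A"
      using z A(2) by auto
    ultimately show "\<exists>W. openin (top_of_set Q) W \<and> z \<in> W \<and> W \<subseteq> ?P"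
      using openin_open_Int[OF A(1), of Q] by blast
  qed
qed

lemma compactin_Zset_UNIV:
  fixes T :: "'a::t2_space \<Rightarrow> 'a"
  assumes cpt: "compact (UNIV :: 'a set)" and lh: "local_homeo T"
  shows "compactin (DR_top T) (Zset T UNIV m n UNIV)"
proof -
  have cont: "continuous_on UNIV (T ^^ q)" for q
    using continuous_on_funpow[OF local_homeo_continuous[OF lh]] .
  let ?Q = "{z :: 'a \<times> 'a. (T ^^ m) (fst z) = (T ^^ n) (snd z)}"
  have "closed ?Q"
    by (intro closed_Collect_eq continuous_on_compose2[OF cont] continuous_on_fst
        continuous_on_snd continuous_on_id) auto
  then have "compact ?Q"
    using compact_Int_closed[OF compact_Times[OF cpt cpt]] by simp
  then have "compactin (top_of_set ?Q) ?Q"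
    by (simp add: compactin_subtopology)
  from image_compactin[OF this continuous_map_lag_embedding[OF lh]] show ?thesis
    by (simp add: image_lag_embedding)
qed

lemma rel_compact_bounded_lags:
  assumes "rel_compact T K"
  obtains M where "\<And>g. g \<in> K \<Longrightarrow> \<exists>m\<le>M. \<exists>n\<le>M. g \<in> Zset T UNIV m n UNIV"
proof -
  let ?Z = "\<lambda>(m, n). Zset T UNIV m n UNIV"
  let ?C = "(DR_top T) closure_of K"
  have cover: "?C \<subseteq> \<Union> (range ?Z)"
    using closure_of_subset_topspace[of "DR_top T" K]
    unfolding topspace_DR_top DR_eq_Union_Zset by auto
  have opens: "\<forall>C\<in>range ?Z. openin (DR_top T) C"
    by (auto intro: openin_Zset)
  have "compactin (DR_top T) ?C"
    using assms by (simp add: rel_compact_def)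
  then have "\<exists>F. finite F \<and> F \<subseteq> range ?Z \<and> ?C \<subseteq> \<Union> F"
    using cover opens unfolding compactin_def by blast
  then obtain F where F: "finite F" "F \<subseteq> range ?Z" "?C \<subseteq> \<Union> F"
    by blast
  then obtain G where G: "finite G" "F = ?Z ` G"
    using finite_subset_image by metis
  define M where "M = Max (insert 0 (fst ` G \<union> snd ` G))"
  have "K \<subseteq> ?C"
    using assms by (intro closure_of_subset) (simp add: rel_compact_def topspace_DR_top)
  have "\<exists>m\<le>M. \<exists>n\<le>M. g \<in> Zset T UNIV m n UNIV" if g: "g \<in> K" for g
  proof -
    obtain m n where mn: "(m, n) \<in> G" "g \<in> Zset T UNIV m n UNIV"
      using g \<open>K \<subseteq> ?C\<close> F(3) G(2) by auto
    moreover have "m \<le> M" "n \<le> M"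
      using mn(1) G(1) unfolding M_def by (intro Max_ge; force)+
    ultimately show ?thesis
      by blast
  qed
  then show ?thesis
    using that by blast
qed

lemma rel_compact_if_bounded_lags:
  fixes T :: "'a::t2_space \<Rightarrow> 'a"
  assumes cpt: "compact (UNIV :: 'a set)" and lh: "local_homeo T"
    and H: "H \<subseteq> (\<Union>(m, n)\<in>{..N} \<times> {..N}. Zset T UNIV m n UNIV)"
  shows "rel_compact T H"
  unfolding rel_compact_def
proof
  show "H \<subseteq> DR T"
    using H Zset_subset_DR by blast
  let ?C = "\<Union>(m, n)\<in>{..N} \<times> {..N}. Zset T UNIV m n UNIV"
  have "closedin (DR_top T) ?C"
    by (intro closedin_Union) (auto intro: closedin_Zset_UNIV[OF lh])
  moreover have "compactin (DR_top T) ?C"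
    by (intro compactin_Union) (auto intro: compactin_Zset_UNIV[OF cpt lh])
  moreover have "(DR_top T) closure_of H \<subseteq> ?C"
    using closure_of_minimal[OF H] calculation(1) by blast
  ultimately show "compactin (DR_top T) ((DR_top T) closure_of H)"
    using closed_compactin closedin_closure_of by blast
qed

definition msupp :: "(int \<Rightarrow> real) \<Rightarrow> int set" where
  "msupp \<mu> = {m. \<mu> m \<noteq> 0}"

lemma Pd_finite_msupp: "\<mu> \<in> Pd d \<Longrightarrow> finite (msupp \<mu>)"
  by (simp add: Pd_def msupp_def)

lemma Pd_nonneg: "\<mu> \<in> Pd d \<Longrightarrow> 0 \<le> \<mu> m"
  by (simp add: Pd_def)

lemma msupp_shift: "msupp (shift n \<mu>) = (\<lambda>s. s + n) ` msupp \<mu>"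
  unfolding msupp_def shift_def by (auto simp: image_iff) (metis diff_add_cancel)

lemma abs_diff_le_rho:
  assumes "finite (msupp \<mu>)" "finite (msupp \<nu>)"
  shows "\<bar>\<mu> m - \<nu> m\<bar> \<le> rho \<mu> \<nu>"
proof (cases "\<mu> m = 0 \<and> \<nu> m = 0")
  case True
  then show ?thesis
    unfolding rho_def by (simp add: sum_nonneg)
next
  case False
  then show ?thesis
    using assms unfolding rho_def msupp_def
    by (intro member_le_sum[where f = "\<lambda>m. \<bar>\<mu> m - \<nu> m\<bar>"]) auto
qed

definition top_set :: "(int \<Rightarrow> real) \<Rightarrow> int set \<Rightarrow> real \<Rightarrow> real \<Rightarrow> bool" where
  "top_set \<mu> S a b \<longleftrightarrow> a < b \<and> (\<forall>s\<in>S. b < \<mu> s) \<and> (\<forall>t. t \<notin> S \<longrightarrow> \<mu> t < a)"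

lemma top_set_unique:
  assumes "finite S" "finite S'" "card S = card S'" "top_set \<mu> S a b" "top_set \<mu> S' a' b'"
  shows "S = S'"
proof (rule ccontr)
  assume ne: "S \<noteq> S'"
  have "\<not> S \<subseteq> S'"
    using ne assms(2,3) card_subset_eq[of S' S] by auto
  moreover have "\<not> S' \<subseteq> S"
    using ne assms(1,3) card_subset_eq[of S S'] by auto
  ultimately obtain s t where "s \<in> S" "s \<notin> S'" "t \<in> S'" "t \<notin> S"
    by blast
  then have "b < \<mu> s" "\<mu> s < a'" "b' < \<mu> t" "\<mu> t < a" "a < b" "a' < b'"
    using assms(4,5) unfolding top_set_def by auto
  then show False by linarith
qed

lemma top_set_near_shift:
  assumes top: "top_set \<mu> S a b" and near: "rho \<nu> (shift k \<mu>) < \<epsilon>"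
    and fin: "finite (msupp \<mu>)" "finite (msupp \<nu>)" and gap: "a + \<epsilon> < b - \<epsilon>"
  shows "top_set \<nu> ((\<lambda>s. s + k) ` S) (a + \<epsilon>) (b - \<epsilon>)"
proof -
  have "finite (msupp (shift k \<mu>))"
    using fin by (simp add: msupp_shift)
  then have close: "\<bar>\<nu> t - \<mu> (t - k)\<bar> < \<epsilon>" for t
    using abs_diff_le_rho[of \<nu> "shift k \<mu>" t] near fin(2) unfolding shift_def by linarith
  have "b - \<epsilon> < \<nu> (s + k)" if "s \<in> S" for s
    using close[of "s + k"] top that unfolding top_set_def by auto
  moreover have "\<nu> t < a + \<epsilon>" if "t \<notin> (\<lambda>s. s + k) ` S" for t
  proof -
    have "t - k \<notin> S"
      using that by (metis diff_add_cancel image_eqI)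
    then show ?thesis
      using close[of t] top unfolding top_set_def by fastforce
  qed
  ultimately show ?thesis
    using gap unfolding top_set_def by blast
qed

definition gap_width :: "nat \<Rightarrow> real" where
  "gap_width d = 1 / (2 * (real d + 1) * (real d + 3))"

lemma gap_width_pos: "0 < gap_width d"
  by (simp add: gap_width_def)

lemma Pd_exists_large_value:
  assumes "\<mu> \<in> Pd d"
  shows "\<exists>m. 1 / (real d + 1) \<le> \<mu> m"
proof (rule ccontr)
  assume "\<not> ?thesis"
  then have lt: "\<mu> m < 1 / (real d + 1)" for m
    by (simp add: not_le)
  have fin: "finite (msupp \<mu>)" and card: "card (msupp \<mu>) \<le> d + 1"
    and sum: "(\<Sum>m\<in>msupp \<mu>. \<mu> m) = 1"
    using assms by (auto simp: Pd_def msupp_def)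
  then have "msupp \<mu> \<noteq> {}"
    by auto
  then have "(\<Sum>m\<in>msupp \<mu>. \<mu> m) < (\<Sum>m\<in>msupp \<mu>. 1 / (real d + 1))"
    using fin lt by (intro sum_strict_mono) auto
  also have "\<dots> \<le> 1"
    using card by (simp add: field_simps)
  finally show False
    using sum by simp
qed

lemma exists_free_level:
  fixes V :: "real set"
  assumes "finite V" "card V \<le> d + 1" "0 < \<eta>"
  shows "\<exists>j\<in>{1..d+2}. \<forall>v\<in>V. \<not> (real j * \<eta> \<le> v \<and> v < (real j + 1) * \<eta>)"
proof (rule ccontr)
  assume "\<not> ?thesis"
  then have hit: "\<forall>j\<in>{1..d+2}. \<exists>v\<in>V. real j * \<eta> \<le> v \<and> v < (real j + 1) * \<eta>"
    by blast
  have "{1..d+2} \<subseteq> (\<lambda>v. nat \<lfloor>v / \<eta>\<rfloor>) ` V"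
  proof
    fix j assume "j \<in> {1..d+2}"
    then obtain v where v: "v \<in> V" "real j * \<eta> \<le> v" "v < (real j + 1) * \<eta>"
      using hit by blast
    then have "\<lfloor>v / \<eta>\<rfloor> = int j"
      using assms(3) by (simp add: floor_eq_iff pos_le_divide_eq pos_divide_less_eq)
    then show "j \<in> (\<lambda>v. nat \<lfloor>v / \<eta>\<rfloor>) ` V"
      using v(1) by force
  qed
  then have "card {1..d+2} \<le> card ((\<lambda>v. nat \<lfloor>v / \<eta>\<rfloor>) ` V)"
    using assms(1) by (intro card_mono) auto
  also have "\<dots> \<le> card V"
    using assms(1) by (rule card_image_le)
  finally show False
    using assms(2) by simp
qed

lemma top_set_above_free_window:
  assumes "0 < \<eta>" and free: "\<And>m. \<not> (c \<le> \<mu> m \<and> \<mu> m < c + \<eta>)"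
  shows "top_set \<mu> {m. c + \<eta> \<le> \<mu> m} c (c + \<eta> - \<eta> / 4)"
  unfolding top_set_def
proof (intro conjI ballI allI impI)
  fix t assume "t \<notin> {m. c + \<eta> \<le> \<mu> m}"
  then show "\<mu> t < c"
    using free[of t] by auto
qed (use assms(1) in auto)

text \<open>
  With \<eta> = 2 w, some atom has mass at least 1 / (d + 1) = (d + 3) \<eta>, and one of the d + 2
  windows [j \<eta>, (j + 1) \<eta>) below it contains no mass value; the atoms of mass at least
  (j + 1) \<eta> then sit above a gap of width 3 \<eta> / 4 > w.
\<close>
lemma Pd_exists_top_set:
  assumes "\<mu> \<in> Pd d"
  shows "\<exists>S a b. finite S \<and> S \<noteq> {} \<and> card S \<le> d + 1 \<and> top_set \<mu> S a b \<and> gap_width d < b - a"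
proof -
  define \<eta> where "\<eta> = 2 * gap_width d"
  have "0 < 2 * (real d + 1) * (real d + 3)"
    by simp
  then have \<eta>: "0 < \<eta>" "(real d + 3) * \<eta> = 1 / (real d + 1)"
    unfolding \<eta>_def gap_width_def by (simp_all add: field_simps)
  have fin: "finite (msupp \<mu>)" and card: "card (msupp \<mu>) \<le> d + 1"
    using assms by (auto simp: Pd_def msupp_def)
  then have "card (\<mu> ` msupp \<mu>) \<le> d + 1"
    using card_image_le le_trans by blast
  then obtain j where j: "j \<in> {1..d+2}"
    "\<forall>v\<in>\<mu> ` msupp \<mu>. \<not> (real j * \<eta> \<le> v \<and> v < (real j + 1) * \<eta>)"
    using exists_free_level fin \<eta>(1) by blast
  define c where "c = real j * \<eta>"
  have "0 < c"
    using j(1) \<eta>(1) unfolding c_def by simp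
  then have free: "\<not> (c \<le> \<mu> t \<and> \<mu> t < c + \<eta>)" for t
    using j(2) unfolding c_def msupp_def by (auto simp: algebra_simps)
  define S where "S = {m. c + \<eta> \<le> \<mu> m}"
  obtain m where m: "1 / (real d + 1) \<le> \<mu> m"
    using Pd_exists_large_value[OF assms] by blast
  have "(real j + 1) * \<eta> \<le> (real d + 3) * \<eta>"
    using j(1) \<eta>(1) by (intro mult_right_mono) auto
  moreover have "c + \<eta> = (real j + 1) * \<eta>"
    unfolding c_def by (simp add: algebra_simps)
  ultimately have "m \<in> S"
    using m \<eta>(2) unfolding S_def mem_Collect_eq by linarith
  have S_supp: "S \<subseteq> msupp \<mu>"
    unfolding S_def msupp_def using \<open>0 < c\<close> \<eta>(1) by auto
  then have "finite S" "card S \<le> d + 1"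
    using fin card card_mono[OF fin S_supp] finite_subset by auto
  moreover have "S \<noteq> {}"
    using \<open>m \<in> S\<close> by blast
  moreover have "top_set \<mu> S c (c + \<eta> - \<eta> / 4)"
    unfolding S_def using \<eta>(1) free by (rule top_set_above_free_window)
  moreover have "gap_width d < (c + \<eta> - \<eta> / 4) - c"
    using gap_width_pos[of d] unfolding \<eta>_def by (simp add: algebra_simps)
  ultimately show ?thesis
    by (intro exI[of _ S] exI[of _ c] exI[of _ "c + \<eta> - \<eta> / 4"]) blast
qed

definition top_region :: "('a \<Rightarrow> int \<Rightarrow> real) \<Rightarrow> real \<Rightarrow> nat \<Rightarrow> 'a set" where
  "top_region \<phi> w i =
     {x. \<exists>S a b. finite S \<and> card S = Suc i \<and> top_set (\<phi> x) S a b \<and> w < b - a}"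

text \<open>By top_set_unique the chosen set does not depend on the choice.\<close>
definition top_choice :: "('a \<Rightarrow> int \<Rightarrow> real) \<Rightarrow> real \<Rightarrow> nat \<Rightarrow> 'a \<Rightarrow> int set" where
  "top_choice \<phi> w i x =
     (SOME S. \<exists>a b. finite S \<and> card S = Suc i \<and> top_set (\<phi> x) S a b \<and> w < b - a)"

definition top_level :: "('a \<Rightarrow> int \<Rightarrow> real) \<Rightarrow> real \<Rightarrow> nat \<Rightarrow> 'a \<Rightarrow> int" where
  "top_level \<phi> w i x = Min (top_choice \<phi> w i x)"

lemma top_choice_spec:
  assumes "x \<in> top_region \<phi> w i"
  shows "\<exists>a b. finite (top_choice \<phi> w i x) \<and> card (top_choice \<phi> w i x) = Suc i \<and>
    top_set (\<phi> x) (top_choice \<phi> w i x) a b \<and> w < b - a"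
  using assms unfolding top_region_def top_choice_def mem_Collect_eq by (rule someI_ex)

lemma top_level_in_top_choice:
  assumes "x \<in> top_region \<phi> w i"
  shows "top_level \<phi> w i x \<in> top_choice \<phi> w i x"
  using top_choice_spec[OF assms] unfolding top_level_def by (intro Min_in) auto

lemma open_top_region:
  fixes \<phi> :: "'a::metric_space \<Rightarrow> int \<Rightarrow> real"
  assumes rc: "rho_continuous \<phi>" and P: "\<And>x. \<phi> x \<in> Pd d" and "0 \<le> w"
  shows "open (top_region \<phi> w i)"
  unfolding open_dist
proof (intro ballI)
  fix x assume "x \<in> top_region \<phi> w i"
  then obtain S a b where S: "finite S" "card S = Suc i" "top_set (\<phi> x) S a b" "w < b - a"
    unfolding top_region_def by blast
  define r where "r = (b - a - w) / 4"
  have gap: "a + r < b - r" "w < (b - r) - (a + r)"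
    using S(4) \<open>0 \<le> w\<close> unfolding r_def by (simp_all add: field_simps)
  have "0 < r"
    using S(4) unfolding r_def by simp
  then obtain \<delta> where "0 < \<delta>" "\<And>y. dist y x < \<delta> \<Longrightarrow> rho (\<phi> y) (\<phi> x) < r"
    using rc unfolding rho_continuous_def by blast
  moreover have "y \<in> top_region \<phi> w i" if "rho (\<phi> y) (\<phi> x) < r" for y
  proof -
    have "rho (\<phi> y) (shift 0 (\<phi> x)) < r"
      using that by (simp add: shift_def)
    then have "top_set (\<phi> y) ((\<lambda>s. s + 0) ` S) (a + r) (b - r)"
      using top_set_near_shift[OF S(3) _ Pd_finite_msupp[OF P] Pd_finite_msupp[OF P] gap(1)] by blast
    then have "top_set (\<phi> y) S (a + r) (b - r)"
      by simp
    then show ?thesis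
      using S(1,2) gap(2) unfolding top_region_def mem_Collect_eq by blast
  qed
  ultimately show "\<exists>e>0. \<forall>y. dist y x < e \<longrightarrow> y \<in> top_region \<phi> w i"
    by blast
qed

lemma top_region_cover:
  assumes "\<phi> x \<in> Pd d"
  shows "\<exists>i\<le>d. x \<in> top_region \<phi> (gap_width d) i"
proof -
  obtain S a b where S: "finite S" "S \<noteq> {}" "card S \<le> d + 1" "top_set (\<phi> x) S a b"
    "gap_width d < b - a"
    using Pd_exists_top_set[OF assms] by blast
  then have "card S \<noteq> 0"
    by simp
  then obtain i where i: "card S = Suc i"
    using not0_implies_Suc by blast
  then have "x \<in> top_region \<phi> (gap_width d) i"
    using S(1,4,5) unfolding top_region_def by blast
  moreover have "i \<le> d"
    using S(3) i by simp
  ultimately show ?thesis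
    by blast
qed

lemma Tn_set_funpow: "(T ^^ m) x \<in> Tn_set T (int m) x"
  by (simp add: Tn_set_def)

lemma Tn_set_funpow_preimage: "(T ^^ n) y = z \<Longrightarrow> y \<in> Tn_set T (- int n) z"
  by (cases "n = 0") (auto simp: Tn_set_def)

lemma top_choice_translate:
  assumes P: "\<And>x. \<phi> x \<in> Pd d" and eq: "equivariant T E \<epsilon> \<phi>" and "4 * \<epsilon> \<le> w"
    and E: "int m \<in> E" "- int n \<in> E"
    and x: "x \<in> top_region \<phi> w i" and y: "y \<in> top_region \<phi> w i"
    and xy: "(T ^^ m) x = (T ^^ n) y"
  shows "top_choice \<phi> w i y = (\<lambda>s. s + (int m - int n)) ` top_choice \<phi> w i x"
proof -
  obtain a b where A: "finite (top_choice \<phi> w i x)" "card (top_choice \<phi> w i x) = Suc i"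
      "top_set (\<phi> x) (top_choice \<phi> w i x) a b" "w < b - a"
    using top_choice_spec[OF x] by blast
  obtain a' b' where B: "finite (top_choice \<phi> w i y)" "card (top_choice \<phi> w i y) = Suc i"
      "top_set (\<phi> y) (top_choice \<phi> w i y) a' b'"
    using top_choice_spec[OF y] by blast
  define z where "z = (T ^^ m) x"
  have fin: "finite (msupp (\<phi> v))" for v
    using Pd_finite_msupp[OF P] .
  have equi: "rho (\<phi> v) (shift k (\<phi> u)) < \<epsilon>" if "k \<in> E" "v \<in> Tn_set T k u" for k u v
    using eq that unfolding equivariant_def by blast
  have "a < b"
    using A(3) unfolding top_set_def by blast
  then have gap: "a + \<epsilon> < b - \<epsilon>" "a + \<epsilon> + \<epsilon> < b - \<epsilon> - \<epsilon>"
    using A(4) \<open>4 * \<epsilon> \<le> w\<close> by linarith+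
  \<comment> \<open>Two equivariance steps, x to z and z back to y, each moving every mass by less than \<epsilon>.\<close>
  have "rho (\<phi> z) (shift (int m) (\<phi> x)) < \<epsilon>"
    unfolding z_def by (rule equi[OF E(1) Tn_set_funpow])
  then have "top_set (\<phi> z) ((\<lambda>s. s + int m) ` top_choice \<phi> w i x) (a + \<epsilon>) (b - \<epsilon>)"
    using top_set_near_shift[OF A(3) _ fin fin gap(1)] by blast
  moreover have "rho (\<phi> y) (shift (- int n) (\<phi> z)) < \<epsilon>"
    by (rule equi[OF E(2) Tn_set_funpow_preimage]) (simp add: z_def xy)
  ultimately have "top_set (\<phi> y) ((\<lambda>s. s + - int n) ` (\<lambda>s. s + int m) ` top_choice \<phi> w i x)
      (a + \<epsilon> + \<epsilon>) (b - \<epsilon> - \<epsilon>)"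
    using top_set_near_shift[OF _ _ fin fin gap(2)] by blast
  then have top: "top_set (\<phi> y) ((\<lambda>s. s + (int m - int n)) ` top_choice \<phi> w i x)
      (a + \<epsilon> + \<epsilon>) (b - \<epsilon> - \<epsilon>)"
    by (simp add: image_image algebra_simps)
  have "card ((\<lambda>s. s + (int m - int n)) ` top_choice \<phi> w i x) = Suc i"
    using A(2) by (simp add: card_image)
  then show ?thesis
    using top_set_unique[OF B(1) _ _ B(3) top] A(1) B(2) by simp
qed

lemma top_level_translate:
  assumes "\<And>x. \<phi> x \<in> Pd d" "equivariant T E \<epsilon> \<phi>" "4 * \<epsilon> \<le> w"
    and "int m \<in> E" "- int n \<in> E"
    and x: "x \<in> top_region \<phi> w i" and "y \<in> top_region \<phi> w i"
    and "(T ^^ m) x = (T ^^ n) y"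
  shows "top_level \<phi> w i y = top_level \<phi> w i x + (int m - int n)"
proof -
  have "finite (top_choice \<phi> w i x)" "card (top_choice \<phi> w i x) = Suc i"
    using top_choice_spec[OF x] by auto
  then show ?thesis
    unfolding top_level_def top_choice_translate[OF assms]
    by (intro mono_Min_commute[symmetric]) (auto simp: mono_def)
qed

lemma finite_large_masses:
  fixes \<phi> :: "'a::metric_space \<Rightarrow> int \<Rightarrow> real"
  assumes cpt: "compact (UNIV :: 'a set)" and rc: "rho_continuous \<phi>"
    and P: "\<And>x. \<phi> x \<in> Pd d" and "0 < c"
  shows "finite {m. \<exists>x. c < \<phi> x m}"
proof -
  have "\<forall>x. \<exists>\<delta>>0. \<forall>y. dist y x < \<delta> \<longrightarrow> rho (\<phi> y) (\<phi> x) < c"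
    using rc \<open>0 < c\<close> unfolding rho_continuous_def by blast
  then obtain \<delta> where \<delta>: "\<And>x. 0 < \<delta> x" "\<And>x y. dist y x < \<delta> x \<Longrightarrow> rho (\<phi> y) (\<phi> x) < c"
    by metis
  have "UNIV \<subseteq> (\<Union>x. ball x (\<delta> x))"
    using \<delta>(1) by auto
  then obtain C where C: "finite C" "UNIV \<subseteq> (\<Union>x\<in>C. ball x (\<delta> x))"
    using compactE_image[OF cpt, of UNIV "\<lambda>x. ball x (\<delta> x)"] by auto
  have "{m. \<exists>x. c < \<phi> x m} \<subseteq> (\<Union>x\<in>C. msupp (\<phi> x))"
  proof
    fix m assume "m \<in> {m. \<exists>x. c < \<phi> x m}"
    then obtain y where y: "c < \<phi> y m"
      by blast
    have "y \<in> (\<Union>x\<in>C. ball x (\<delta> x))"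
      using C(2) by blast
    then obtain x where x: "x \<in> C" "dist y x < \<delta> x"
      by (auto simp: dist_commute)
    then have "\<bar>\<phi> y m - \<phi> x m\<bar> < c"
      using \<delta>(2) abs_diff_le_rho[OF Pd_finite_msupp[OF P] Pd_finite_msupp[OF P]]
      by (meson le_less_trans)
    then show "m \<in> (\<Union>x\<in>C. msupp (\<phi> x))"
      using x(1) y unfolding msupp_def by force
  qed
  moreover have "finite (\<Union>x\<in>C. msupp (\<phi> x))"
    using C(1) Pd_finite_msupp[OF P] by blast
  ultimately show ?thesis
    using finite_subset by blast
qed

lemma top_level_bounded:
  fixes \<phi> :: "'a::metric_space \<Rightarrow> int \<Rightarrow> real"
  assumes "compact (UNIV :: 'a set)" "rho_continuous \<phi>" and P: "\<And>x. \<phi> x \<in> Pd d" and "0 < w"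
  obtains B where "\<And>i x. x \<in> top_region \<phi> w i \<Longrightarrow> \<bar>top_level \<phi> w i x\<bar> \<le> B"
proof -
  define F where "F = {m. \<exists>x. w < \<phi> x m}"
  have "finite F"
    unfolding F_def using finite_large_masses assms by blast
  have in_F: "top_level \<phi> w i x \<in> F" if x: "x \<in> top_region \<phi> w i" for i x
  proof -
    obtain a b where A: "finite (top_choice \<phi> w i x)" "top_set (\<phi> x) (top_choice \<phi> w i x) a b"
        "w < b - a"
      using top_choice_spec[OF x] by blast
    \<comment> \<open>Any t outside the finite top set has 0 \<le> \<phi> x t < a, so top masses exceed b > w.\<close>
    obtain t where "t \<notin> top_choice \<phi> w i x"
      using A(1) ex_new_if_finite infinite_UNIV_int by blast
    then have "\<phi> x t < a"
      using A(2) unfolding top_set_def by blast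
    moreover have "b < \<phi> x (top_level \<phi> w i x)"
      using A(2) top_level_in_top_choice[OF x] unfolding top_set_def by blast
    ultimately have "w < \<phi> x (top_level \<phi> w i x)"
      using A(3) Pd_nonneg[OF P, of x t] by linarith
    then show ?thesis
      unfolding F_def by blast
  qed
  show ?thesis
  proof (rule that)
    fix i x assume "x \<in> top_region \<phi> w i"
    then have "\<bar>top_level \<phi> w i x\<bar> \<in> abs ` F"
      using in_F by blast
    then show "\<bar>top_level \<phi> w i x\<bar> \<le> Max (abs ` F)"
      using \<open>finite F\<close> by (intro Max_ge) auto
  qed
qed

text \<open>L is meant to bound c on U, so that the exponents L - c x are genuine natural numbers.\<close>
definition cocycle_groupoid ::
    "('a \<Rightarrow> 'a) \<Rightarrow> 'a set \<Rightarrow> ('a \<Rightarrow> int) \<Rightarrow> int \<Rightarrow> ('a \<times> int \<times> 'a) set" where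
  "cocycle_groupoid T U c L =
     {(x, k, y). x \<in> U \<and> y \<in> U \<and> k = c y - c x \<and>
        (T ^^ nat (L - c x)) x = (T ^^ nat (L - c y)) y}"

lemma cocycle_groupoid_subset_Zset:
  assumes "\<And>x. x \<in> U \<Longrightarrow> \<bar>c x\<bar> \<le> L"
  shows "cocycle_groupoid T U c L \<subseteq>
    (\<Union>(m, n)\<in>{..nat (2 * L)} \<times> {..nat (2 * L)}. Zset T UNIV m n UNIV)"
proof
  fix g assume "g \<in> cocycle_groupoid T U c L"
  then obtain x y where g: "g = (x, c y - c x, y)" "x \<in> U" "y \<in> U"
      "(T ^^ nat (L - c x)) x = (T ^^ nat (L - c y)) y"
    unfolding cocycle_groupoid_def by auto
  have "\<bar>c x\<bar> \<le> L" "\<bar>c y\<bar> \<le> L"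
    using assms g(2,3) by auto
  then have "g \<in> Zset T UNIV (nat (L - c x)) (nat (L - c y)) UNIV"
    and "nat (L - c x) \<le> nat (2 * L)" "nat (L - c y) \<le> nat (2 * L)"
    using g(1,4) unfolding Zset_def by auto
  then show "g \<in> (\<Union>(m, n)\<in>{..nat (2 * L)} \<times> {..nat (2 * L)}. Zset T UNIV m n UNIV)"
    by (intro UN_I[of "(nat (L - c x), nat (L - c y))"]) auto
qed

lemma subgroupoid_cocycle_groupoid:
  assumes "\<And>x. x \<in> U \<Longrightarrow> \<bar>c x\<bar> \<le> L"
  shows "subgroupoid T (cocycle_groupoid T U c L)"
  unfolding subgroupoid_def
proof (intro conjI allI impI)
  show "cocycle_groupoid T U c L \<subseteq> DR T"
  proof (rule order_trans[OF cocycle_groupoid_subset_Zset[OF assms]])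
    show "(\<Union>(m, n)\<in>{..nat (2 * L)} \<times> {..nat (2 * L)}. Zset T UNIV m n UNIV) \<subseteq> DR T"
      by (rule UN_least) (simp add: case_prod_beta Zset_subset_DR)
  qed
next
  fix x k y l z
  assume "(x, k, y) \<in> cocycle_groupoid T U c L \<and> (y, l, z) \<in> cocycle_groupoid T U c L"
  then show "(x, k + l, z) \<in> cocycle_groupoid T U c L"
    unfolding cocycle_groupoid_def by simp
next
  fix x k y
  assume "(x, k, y) \<in> cocycle_groupoid T U c L"
  then show "(y, - k, x) \<in> cocycle_groupoid T U c L"
    unfolding cocycle_groupoid_def by simp
qed

lemma rel_compact_cocycle_groupoid:
  fixes T :: "'a::t2_space \<Rightarrow> 'a"
  assumes "compact (UNIV :: 'a set)" "local_homeo T" "\<And>x. x \<in> U \<Longrightarrow> \<bar>c x\<bar> \<le> L"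
  shows "rel_compact T (cocycle_groupoid T U c L)"
  using rel_compact_if_bounded_lags[OF assms(1,2) cocycle_groupoid_subset_Zset[OF assms(3)]] .

lemma Zset_subset_cocycle_groupoid:
  assumes cocycle: "\<And>x y. x \<in> U \<Longrightarrow> y \<in> U \<Longrightarrow> (T ^^ m) x = (T ^^ n) y \<Longrightarrow>
      c y = c x + (int m - int n)"
    and room: "\<And>x. x \<in> U \<Longrightarrow> c x + int m \<le> L"
  shows "Zset T U m n U \<subseteq> cocycle_groupoid T U c L"
proof
  fix g assume "g \<in> Zset T U m n U"
  then obtain x y where g: "g = (x, int m - int n, y)" "x \<in> U" "y \<in> U" "(T ^^ m) x = (T ^^ n) y"
    unfolding Zset_def by auto
  define p where "p = nat (L - c x - int m)"
  have "c y = c x + (int m - int n)"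
    using cocycle g(2-4) .
  then have "nat (L - c x) = p + m" "nat (L - c y) = p + n"
    using room[OF g(2)] unfolding p_def by auto
  then have "(T ^^ nat (L - c x)) x = (T ^^ nat (L - c y)) y"
    using g(4) by (simp add: funpow_add)
  then show "g \<in> cocycle_groupoid T U c L"
    using g \<open>c y = c x + (int m - int n)\<close> unfolding cocycle_groupoid_def by auto
qed

lemma Zset_subset_top_level_groupoid:
  assumes P: "\<And>x. \<phi> x \<in> Pd d" and eq: "equivariant T {- int M..int M} (w / 4) \<phi>"
    and B: "\<And>x. x \<in> top_region \<phi> w i \<Longrightarrow> \<bar>top_level \<phi> w i x\<bar> \<le> B"
    and mn: "m \<le> M" "n \<le> M"
  shows "Zset T (top_region \<phi> w i) m n (top_region \<phi> w i) \<subseteq>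
    cocycle_groupoid T (top_region \<phi> w i) (top_level \<phi> w i) (B + int M)"
proof (rule Zset_subset_cocycle_groupoid)
  fix x y assume xy: "x \<in> top_region \<phi> w i" "y \<in> top_region \<phi> w i" "(T ^^ m) x = (T ^^ n) y"
  have "4 * (w / 4) \<le> w" "int m \<in> {- int M..int M}" "- int n \<in> {- int M..int M}"
    using mn by auto
  from top_level_translate[OF P eq this xy]
  show "top_level \<phi> w i y = top_level \<phi> w i x + (int m - int n)" .
next
  fix x assume "x \<in> top_region \<phi> w i"
  then show "top_level \<phi> w i x + int m \<le> B + int M"
    using B[of x] mn(1) by linarith
qed

lemma top_region_groupoid:
  fixes T :: "'a::metric_space \<Rightarrow> 'a" and \<phi> :: "'a \<Rightarrow> int \<Rightarrow> real"
  assumes cpt: "compact (UNIV :: 'a set)" and lh: "local_homeo T"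
    and P: "\<And>x. \<phi> x \<in> Pd d" and rc: "rho_continuous \<phi>"
    and eq: "equivariant T {- int M..int M} (w / 4) \<phi>" and "0 < w"
    and K: "\<And>g. g \<in> K \<Longrightarrow> \<exists>m\<le>M. \<exists>n\<le>M. g \<in> Zset T UNIV m n UNIV"
  shows "\<exists>H. subgroupoid T H \<and> rel_compact T H \<and>
    {g \<in> K. src g \<in> top_region \<phi> w i \<and> rng g \<in> top_region \<phi> w i} \<subseteq> H"
proof -
  let ?U = "top_region \<phi> w i"
  obtain B where B: "\<And>i x. x \<in> top_region \<phi> w i \<Longrightarrow> \<bar>top_level \<phi> w i x\<bar> \<le> B"
    using top_level_bounded[OF cpt rc P \<open>0 < w\<close>] by blast
  define H where "H = cocycle_groupoid T ?U (top_level \<phi> w i) (B + int M)"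
  have bound: "\<bar>top_level \<phi> w i x\<bar> \<le> B + int M" if "x \<in> ?U" for x
    using B[OF that] by simp
  have "g \<in> H" if g: "g \<in> K" "src g \<in> ?U" "rng g \<in> ?U" for g
  proof -
    obtain m n where mn: "m \<le> M" "n \<le> M" "g \<in> Zset T UNIV m n UNIV"
      using K g(1) by blast
    then have "g \<in> Zset T ?U m n ?U"
      using g by (auto simp: Zset_def src_def rng_def)
    then show ?thesis
      using Zset_subset_top_level_groupoid[OF P eq B mn(1,2)] unfolding H_def by blast
  qed
  moreover have "subgroupoid T H"
    unfolding H_def by (rule subgroupoid_cocycle_groupoid[OF bound])
  moreover have "rel_compact T H"
    unfolding H_def by (rule rel_compact_cocycle_groupoid[OF cpt lh bound])
  ultimately show ?thesis
    by (intro exI[of _ H]) auto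
qed

theorem lemma5p11:
  fixes T :: "'a::metric_space \<Rightarrow> 'a" and d :: nat
  assumes "compact (UNIV :: 'a set)"
    and "surj T"
    and "local_homeo T"
    and "finite (Sp_l T)"
    and "\<forall>x\<in>Sp_l T. open {x}"
    and "dim_am_le T d"
  shows "dad_le T d"
  unfolding dad_le_def
proof (intro allI impI)
  fix K assume "openin (DR_top T) K \<and> rel_compact T K"
  then obtain M where M: "\<And>g. g \<in> K \<Longrightarrow> \<exists>m\<le>M. \<exists>n\<le>M. g \<in> Zset T UNIV m n UNIV"
    using rel_compact_bounded_lags[of T K] by blast
  define w where "w = gap_width d"
  have "0 < w" "finite {- int M..int M}" "0 < w / 4"
    using gap_width_pos[of d] by (simp_all add: w_def)
  then obtain \<phi> where P: "\<And>x. \<phi> x \<in> Pd d" and rc: "rho_continuous \<phi>"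
    and eq: "equivariant T {- int M..int M} (w / 4) \<phi>"
    using assms(6) unfolding dim_am_le_def by blast
  show "\<exists>U. (\<forall>i\<le>d. open (U i)) \<and> src ` K \<union> rng ` K \<subseteq> (\<Union>i\<le>d. U i) \<and>
      (\<forall>i\<le>d. \<exists>H. subgroupoid T H \<and> rel_compact T H \<and> {g \<in> K. src g \<in> U i \<and> rng g \<in> U i} \<subseteq> H)"
  proof (intro exI[of _ "top_region \<phi> w"] conjI allI impI)
    show "open (top_region \<phi> w i)" for i
      using \<open>0 < w\<close> by (intro open_top_region[OF rc P]) simp
    show "src ` K \<union> rng ` K \<subseteq> (\<Union>i\<le>d. top_region \<phi> w i)"
      using top_region_cover[of \<phi>, OF P] unfolding w_def by auto
    show "\<exists>H. subgroupoid T H \<and> rel_compact T H \<and>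
        {g \<in> K. src g \<in> top_region \<phi> w i \<and> rng g \<in> top_region \<phi> w i} \<subseteq> H" for i
      by (rule top_region_groupoid[OF assms(1,3) P rc eq \<open>0 < w\<close> M])
  qed
qed

end
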